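(* Let $T>0$ and let $a\in C[0,1]$ with $a>0$ on $(0,1]$, $a(0)=0$ and $x\mapsto x/a(x)$ integrable, so that $p(x)=\int_0^x\frac{y}{a(y)}e^{y^2}dy$ is bounded on $[0,1]$ with $\|p\|_{L^\infty(0,1)}>0$. Let $\sigma\in C^2([0,1])$ with $\sigma>0$ in $(0,1)$, $\sigma(0)=\sigma(1)=0$, and choose $\beta=4$, $\rho>\frac{\ln 2}{\|\sigma\|_\infty}$, and $$\lambda\in\Big[\frac{e^{2\rho\|\sigma\|_\infty}-1}{(\beta-1)\|p\|_{L^\infty(0,1)}},\ \frac{2(e^{2\rho\|\sigma\|_\infty}-e^{\rho\|\sigma\|_\infty})}{(\beta-1)\|p\|_{L^\infty(0,1)}}\Big).$$ Let $T^*=(1+\varepsilon)\frac T2$ with $\varepsilon\in\big(0,\sqrt{1-\tfrac{2\sqrt2}{3}}\big)$. Then $$2\big(\hat\phi(0)-\check\phi(T^* )+\hat\Phi(0)\big)<0.$$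
   Context: $\theta(t)=\frac{1}{[t(T-t)]^2}$; $\nu(t)=\theta(T/2)$ on $[0,T/2]$, $\nu(t)=\theta(t)$ on $[T/2,T]$; $\psi(x)=\lambda(p(x)-\beta\|p\|_{L^\infty(0,1)})$; $\Psi(x)=e^{\rho\sigma(x)}-e^{2\rho\|\sigma\|_\infty}$; $\tilde\phi(t,x)=\nu(t)\psi(x)$, $\tilde\Phi(t,x)=\nu(t)\Psi(x)$; $\hat\phi(t)=\max_{x\in[0,1]}\tilde\phi(t,x)$, $\check\phi(t)=\min_{x\in[0,1]}\tilde\phi(t,x)$, $\hat\Phi(t)=\max_{x\in[0,1]}\tilde\Phi(t,x)$. *)

theory Defs
  imports "HOL-Analysis.Analysis"
begin

definition C2_on :: "real set \<Rightarrow> (real \<Rightarrow> real) \<Rightarrow> bool" where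
  "C2_on S f \<longleftrightarrow> (\<exists>f' f''. (\<forall>x\<in>S. (f has_real_derivative f' x) (at x within S)
      \<and> (f' has_real_derivative f'' x) (at x within S)) \<and> continuous_on S f'')"

definition supnorm01 :: "(real \<Rightarrow> real) \<Rightarrow> real" where
  "supnorm01 f = (SUP x\<in>{0..1}. \<bar>f x\<bar>)"

definition pfun :: "(real \<Rightarrow> real) \<Rightarrow> real \<Rightarrow> real" where
  "pfun a x = integral {0..x} (\<lambda>y. y / a y * exp (y^2))"

definition theta :: "real \<Rightarrow> real \<Rightarrow> real" where
  "theta T t = 1 / (t * (T - t))^2"

definition nu :: "real \<Rightarrow> real \<Rightarrow> real" where
  "nu T t = (if t \<le> T/2 then theta T (T/2) else theta T t)"

definition psi :: "(real \<Rightarrow> real) \<Rightarrow> real \<Rightarrow> real \<Rightarrow> real \<Rightarrow> real" where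
  "psi a lam \<beta> x = lam * (pfun a x - \<beta> * supnorm01 (pfun a))"

definition Psi :: "(real \<Rightarrow> real) \<Rightarrow> real \<Rightarrow> real \<Rightarrow> real" where
  "Psi \<sigma> \<rho> x = exp (\<rho> * \<sigma> x) - exp (2 * \<rho> * supnorm01 \<sigma>)"

definition phi_hat :: "real \<Rightarrow> (real \<Rightarrow> real) \<Rightarrow> real \<Rightarrow> real \<Rightarrow> real \<Rightarrow> real" where
  "phi_hat T a lam \<beta> t = (SUP x\<in>{0..1}. nu T t * psi a lam \<beta> x)"

definition phi_check :: "real \<Rightarrow> (real \<Rightarrow> real) \<Rightarrow> real \<Rightarrow> real \<Rightarrow> real \<Rightarrow> real" where
  "phi_check T a lam \<beta> t = (INF x\<in>{0..1}. nu T t * psi a lam \<beta> x)"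

definition Phi_hat :: "real \<Rightarrow> (real \<Rightarrow> real) \<Rightarrow> real \<Rightarrow> real \<Rightarrow> real" where
  "Phi_hat T \<sigma> \<rho> t = (SUP x\<in>{0..1}. nu T t * Psi \<sigma> \<rho> x)"

end

theory Submission
  imports Defs
begin

text \<open>
  Write P = supnorm01 (pfun a) and S = supnorm01 \<sigma>. Since 0 \<le> p \<le> P and \<sigma> \<le> S on [0,1],
  phi_hat(0) \<le> -3 lam P nu(0), phi_check(T*) \<ge> -4 lam P nu(T*) and
  Phi_hat(0) \<le> nu(0) (e^(\<rho> S) - e^(2 \<rho> S)). Moreover nu(0) = 16/T^4 and
  nu(T*) = nu(0) / (1 - \<epsilon>^2)^2 < 9/8 nu(0) by the choice of \<epsilon>. Hence the quantity is
  below 2 nu(0) (3/2 lam P - (e^(2 \<rho> S) - e^(\<rho> S))), which is negative by the upper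
  bound on lam; the lower bound on lam only serves to make lam nonnegative.
\<close>

lemma integrable_on_mult_continuous_nonneg:
  fixes g h :: "real \<Rightarrow> real"
  assumes g: "g integrable_on {u..v}" and g_nonneg: "\<And>y. y \<in> {u..v} \<Longrightarrow> 0 \<le> g y"
    and h: "continuous_on {u..v} h"
  shows "(\<lambda>y. g y * h y) integrable_on {u..v}"
proof -
  have "g absolutely_integrable_on {u..v}"
    using nonnegative_absolutely_integrable_1[OF g] g_nonneg by blast
  moreover have "bounded (h ` {u..v})"
    by (intro compact_imp_bounded compact_continuous_image h) simp
  ultimately have "(\<lambda>y. h y * g y) absolutely_integrable_on {u..v}"
    by (intro absolutely_integrable_bounded_measurable_product_real
        continuous_imp_measurable_on_sets_lebesgue[OF h]) auto
  then show ?thesis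
    by (simp add: mult.commute absolutely_integrable_on_def)
qed

lemma divide_nonneg_if_pos_on:
  fixes a :: "real \<Rightarrow> real"
  assumes "\<forall>x\<in>{0<..1}. a x > 0" and "y \<in> {0..1}"
  shows "0 \<le> y / a y"
  using assms by (cases "y = 0") (auto intro!: divide_nonneg_pos)

lemma pfun_bounds:
  fixes a :: "real \<Rightarrow> real"
  assumes nonneg: "\<And>y. y \<in> {0..1} \<Longrightarrow> 0 \<le> y / a y"
    and int: "(\<lambda>y. y / a y) integrable_on {0..1}"
    and x: "x \<in> {0..1}"
  shows "0 \<le> pfun a x" and "pfun a x \<le> pfun a 1"
proof -
  define f where "f = (\<lambda>y::real. y / a y * exp (y^2))"
  have f_nonneg: "0 \<le> f y" if "y \<in> {0..1}" for y
    unfolding f_def by (rule mult_nonneg_nonneg[OF nonneg[OF that]]) simp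
  have f_int: "f integrable_on {0..1}"
    unfolding f_def
    by (intro integrable_on_mult_continuous_nonneg int nonneg continuous_intros)
  have f_int_x: "f integrable_on {0..x}"
    by (rule integrable_on_subinterval[OF f_int]) (use x in auto)
  have "0 \<le> integral {0..x} f"
    by (rule integral_nonneg[OF f_int_x]) (use x f_nonneg in auto)
  moreover have "integral {0..x} f \<le> integral {0..1} f"
    by (rule integral_subset_le[OF _ f_int_x f_int]) (use x f_nonneg in auto)
  ultimately show "0 \<le> pfun a x" and "pfun a x \<le> pfun a 1"
    unfolding pfun_def f_def by simp_all
qed

lemma abs_le_supnorm01:
  assumes "bdd_above ((\<lambda>x. \<bar>f x\<bar>) ` {0..1})" and "x \<in> {0..1}"
  shows "\<bar>f x\<bar> \<le> supnorm01 f"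
  unfolding supnorm01_def using assms by (rule cSUP_upper2) simp

lemma continuous_on_imp_abs_le_supnorm01:
  assumes "continuous_on {0..1} f" and "x \<in> {0..1}"
  shows "\<bar>f x\<bar> \<le> supnorm01 f"
proof (rule abs_le_supnorm01[OF _ assms(2)])
  show "bdd_above ((\<lambda>x. \<bar>f x\<bar>) ` {0..1})"
    by (intro bounded_imp_bdd_above compact_imp_bounded compact_continuous_image
        continuous_intros assms(1)) simp
qed

lemma supnorm01_pos:
  assumes "continuous_on {0..1} f" and "x \<in> {0..1}" and "f x \<noteq> 0"
  shows "0 < supnorm01 f"
  using continuous_on_imp_abs_le_supnorm01[OF assms(1,2)] assms(3) by linarith

lemma pfun_le_supnorm01:
  fixes a :: "real \<Rightarrow> real"
  assumes "\<And>y. y \<in> {0..1} \<Longrightarrow> 0 \<le> y / a y"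
    and "(\<lambda>y. y / a y) integrable_on {0..1}"
    and "x \<in> {0..1}"
  shows "pfun a x \<le> supnorm01 (pfun a)"
proof -
  have "bdd_above ((\<lambda>x. \<bar>pfun a x\<bar>) ` {0..1})"
    using pfun_bounds[OF assms(1,2)] by (intro bdd_aboveI2[where M = "pfun a 1"]) force
  then show ?thesis
    using abs_le_supnorm01[OF _ assms(3)] by force
qed

lemma C2_on_imp_continuous_on:
  assumes "C2_on S f"
  shows "continuous_on S f"
proof -
  obtain f' where "\<forall>x\<in>S. (f has_real_derivative f' x) (at x within S)"
    using assms unfolding C2_on_def by blast
  then show ?thesis
    by (intro DERIV_continuous_on) auto
qed

lemma nu_nonneg: "0 \<le> nu T t"
  unfolding nu_def theta_def by simp

lemma theta_shifted_midpoint: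
  "theta T ((1 + \<epsilon>) * T / 2) = 16 / (T^4 * (1 - \<epsilon>^2)^2)"
proof -
  have product: "(1 + \<epsilon>) * T / 2 * (T - (1 + \<epsilon>) * T / 2) = T^2 * (1 - \<epsilon>^2) / 4"
    by (simp add: field_simps power2_eq_square)
  show ?thesis
    unfolding theta_def product by (simp add: power_divide power_mult_distrib flip: power_mult)
qed

lemma nu_eq_theta: "T / 2 \<le> t \<Longrightarrow> nu T t = theta T t"
  unfolding nu_def by auto

lemma nu_0:
  assumes "0 \<le> T"
  shows "nu T 0 = 16 / T^4"
  using assms theta_shifted_midpoint[of T 0] unfolding nu_def by simp

lemma nu_shifted_midpoint:
  assumes "0 \<le> T" and "0 \<le> \<epsilon>"
  shows "nu T ((1 + \<epsilon>) * T / 2) = 16 / (T^4 * (1 - \<epsilon>^2)^2)"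
proof -
  have "T / 2 \<le> (1 + \<epsilon>) * T / 2"
    using mult_nonneg_nonneg[OF assms(2,1)] by (simp add: algebra_simps)
  then show ?thesis
    by (simp add: nu_eq_theta theta_shifted_midpoint)
qed

lemma one_minus_sq_sq_gt:
  fixes \<epsilon> :: real
  assumes "\<bar>\<epsilon>\<bar> < sqrt (1 - 2 * sqrt 2 / 3)"
  shows "8 / 9 < (1 - \<epsilon>^2)^2"
proof -
  have "sqrt 2 < 3 / 2"
    by (rule real_less_lsqrt) (auto simp: power2_eq_square)
  then have "\<epsilon>^2 < 1 - 2 * sqrt 2 / 3"
    using assms by (metis real_sqrt_abs real_sqrt_less_iff)
  then have "2 * sqrt 2 / 3 < 1 - \<epsilon>^2"
    by linarith
  then have "(2 * sqrt 2 / 3)^2 < (1 - \<epsilon>^2)^2"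
    by (intro power_strict_mono) auto
  then show ?thesis
    by (simp add: power_divide power_mult_distrib)
qed

lemma SUP_mult_le:
  fixes f :: "'a \<Rightarrow> real"
  assumes "A \<noteq> {}" and "0 \<le> c" and "\<And>x. x \<in> A \<Longrightarrow> f x \<le> M"
  shows "(SUP x\<in>A. c * f x) \<le> c * M"
  using assms by (intro cSUP_least) (auto intro: mult_left_mono)

lemma INF_mult_ge:
  fixes f :: "'a \<Rightarrow> real"
  assumes "A \<noteq> {}" and "0 \<le> c" and "\<And>x. x \<in> A \<Longrightarrow> m \<le> f x"
  shows "c * m \<le> (INF x\<in>A. c * f x)"
  using assms by (intro cINF_greatest) (auto intro: mult_left_mono)

lemma phi_hat_le:
  assumes "0 \<le> lam" and "\<And>x. x \<in> {0..1} \<Longrightarrow> pfun a x \<le> M"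
  shows "phi_hat T a lam \<beta> t \<le> nu T t * (lam * (M - \<beta> * supnorm01 (pfun a)))"
  unfolding phi_hat_def psi_def
  using assms by (intro SUP_mult_le nu_nonneg) (auto intro: mult_left_mono)

lemma phi_check_ge:
  assumes "0 \<le> lam" and "\<And>x. x \<in> {0..1} \<Longrightarrow> m \<le> pfun a x"
  shows "nu T t * (lam * (m - \<beta> * supnorm01 (pfun a))) \<le> phi_check T a lam \<beta> t"
  unfolding phi_check_def psi_def
  using assms by (intro INF_mult_ge nu_nonneg) (auto intro: mult_left_mono)

lemma Phi_hat_le:
  assumes "0 \<le> \<rho>" and "\<And>x. x \<in> {0..1} \<Longrightarrow> \<sigma> x \<le> M"
  shows "Phi_hat T \<sigma> \<rho> t \<le> nu T t * (exp (\<rho> * M) - exp (2 * \<rho> * supnorm01 \<sigma>))"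
  unfolding Phi_hat_def Psi_def
  using assms by (intro SUP_mult_le nu_nonneg) (auto intro: mult_left_mono)

lemma lambda_window:
  fixes P E1 E2 lam :: real
  assumes lower: "(E2 - 1) / (3 * P) \<le> lam" and upper: "lam < 2 * (E2 - E1) / (3 * P)"
    and "0 \<le> P" and "1 \<le> E2"
  shows "0 \<le> lam" and "lam * P < 2 * (E2 - E1) / 3"
proof -
  have "P \<noteq> 0"
    using lower upper by auto
  with \<open>0 \<le> P\<close> have "0 < P"
    by simp
  then show "0 \<le> lam"
    using lower \<open>1 \<le> E2\<close> by (smt (verit) divide_nonneg_pos)
  show "lam * P < 2 * (E2 - E1) / 3"
    using upper \<open>0 < P\<close> by (simp add: field_simps)
qed

lemma weighted_bounds_sum_neg:
  fixes c q lam P D h k H :: real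
  assumes "h \<le> c * (lam * (P - 4 * P))" and "c / q * (lam * (0 - 4 * P)) \<le> k"
    and "H \<le> - c * D"
    and "0 < c" and "8 / 9 < q" and "0 \<le> lam" and "0 \<le> P" and "lam * P < 2 * D / 3"
  shows "h - k + H < 0"
proof -
  have "4 / q - 3 \<le> 3 / 2"
    using \<open>8 / 9 < q\<close> by (simp add: field_simps)
  then have "lam * P * (4 / q - 3) \<le> lam * P * (3 / 2)"
    using \<open>0 \<le> lam\<close> \<open>0 \<le> P\<close> by (intro mult_left_mono) auto
  also have "\<dots> < D"
    using assms(8) by simp
  finally have "c * (lam * P * (4 / q - 3) - D) < 0"
    using \<open>0 < c\<close> by (intro mult_pos_neg) auto
  moreover have "c * (lam * P * (4 / q - 3) - D)
      = c * (lam * (P - 4 * P)) - c / q * (lam * (0 - 4 * P)) - c * D"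
    by (simp add: algebra_simps)
  ultimately show ?thesis
    using assms(1-3) by linarith
qed

theorem mainTheorem8:
  fixes T \<beta> \<rho> lam \<epsilon> Tstar :: real and a \<sigma> :: "real \<Rightarrow> real"
  assumes "T > 0"
    and "continuous_on {0..1} a" and "\<forall>x\<in>{0<..1}. a x > 0" and "a 0 = 0"
    and "(\<lambda>x. x / a x) integrable_on {0..1}"
    and "C2_on {0..1} \<sigma>" and "\<forall>x\<in>{0<..<1}. \<sigma> x > 0" and "\<sigma> 0 = 0" and "\<sigma> 1 = 0"
    and "\<beta> = 4"
    and "\<rho> > ln 2 / supnorm01 \<sigma>"
    and "(exp (2 * \<rho> * supnorm01 \<sigma>) - 1) / ((\<beta> - 1) * supnorm01 (pfun a)) \<le> lam"
    and "lam < 2 * (exp (2 * \<rho> * supnorm01 \<sigma>) - exp (\<rho> * supnorm01 \<sigma>)) / ((\<beta> - 1) * supnorm01 (pfun a))"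
    and "0 < \<epsilon>" and "\<epsilon> < sqrt (1 - 2 * sqrt 2 / 3)"
    and "Tstar = (1 + \<epsilon>) * T / 2"
  shows "2 * (phi_hat T a lam \<beta> 0 - phi_check T a lam \<beta> Tstar + Phi_hat T \<sigma> \<rho> 0) < 0"
proof -
  define P S where "P = supnorm01 (pfun a)" and "S = supnorm01 \<sigma>"
  note ratio_nonneg = divide_nonneg_if_pos_on[OF assms(3)]
  note p_nonneg = pfun_bounds(1)[OF ratio_nonneg assms(5)]
  note p_le = pfun_le_supnorm01[OF ratio_nonneg assms(5), folded P_def]
  note \<sigma>_cont = C2_on_imp_continuous_on[OF assms(6)]
  have "0 \<le> P"
    using p_nonneg[of 0] p_le[of 0] by simp
  have \<sigma>_le: "\<sigma> x \<le> S" if "x \<in> {0..1}" for x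
    using continuous_on_imp_abs_le_supnorm01[OF \<sigma>_cont that] unfolding S_def by linarith
  have "0 < \<sigma> (1/2)"
    using assms(7) by simp
  then have "0 < S"
    using supnorm01_pos[OF \<sigma>_cont, of "1/2"] unfolding S_def by simp
  then have "0 < ln 2 / S"
    by simp
  then have "0 < \<rho>"
    using assms(11) unfolding S_def by linarith
  then have "1 \<le> exp (2 * \<rho> * S)"
    using \<open>0 < S\<close> by simp
  with assms(10,12,13) \<open>0 \<le> P\<close> have "0 \<le> lam"
    and lam_P: "lam * P < 2 * (exp (2 * \<rho> * S) - exp (\<rho> * S)) / 3"
    using lambda_window[of "exp (2 * \<rho> * S)" P lam "exp (\<rho> * S)"]
    unfolding P_def S_def by simp_all
  show ?thesis
  proof (intro mult_pos_neg[of 2]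
      weighted_bounds_sum_neg[OF _ _ _ _ _ \<open>0 \<le> lam\<close> \<open>0 \<le> P\<close> lam_P])
    show "phi_hat T a lam \<beta> 0 \<le> 16 / T^4 * (lam * (P - 4 * P))"
      using phi_hat_le[OF \<open>0 \<le> lam\<close> p_le, where T = T and \<beta> = \<beta> and t = 0] assms(1,10)
      by (simp add: nu_0 P_def)
    show "16 / T^4 / (1 - \<epsilon>^2)^2 * (lam * (0 - 4 * P)) \<le> phi_check T a lam \<beta> Tstar"
      unfolding assms(16)
      using phi_check_ge[OF \<open>0 \<le> lam\<close> p_nonneg,
          where T = T and \<beta> = \<beta> and t = "(1 + \<epsilon>) * T / 2"] assms(1,10,14)
      by (simp add: nu_shifted_midpoint P_def)
    show "Phi_hat T \<sigma> \<rho> 0 \<le> - (16 / T^4) * (exp (2 * \<rho> * S) - exp (\<rho> * S))"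
      using Phi_hat_le[of \<rho> \<sigma> S T 0, OF less_imp_le[OF \<open>0 < \<rho>\<close>] \<sigma>_le] assms(1)
      by (simp add: nu_0 S_def algebra_simps)
    show "8 / 9 < (1 - \<epsilon>^2)^2"
      using assms(14,15) by (intro one_minus_sq_sq_gt) simp
  qed (use assms(1) in simp_all)
qed

end
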